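(* Let $p$ be an indecomposable permutation avoiding $3241$ and $4321$ that contains the pattern $321$, with associated triple $(a,b,c)$. Then there is an entry $w$ of $p$ such that $w\,b\,a$ is an occurrence of $321$ in $p$ (i.e. $w$ lies to the left of $b$ and $w>b$).
   Context: Permutations of $[n]$ are in one-line notation; pattern containment/avoidance is in the usual classical sense. Indecomposable: no $k$ with $1\le k\le n-1$ and $\{p_1,\dots,p_k\}=\{1,\dots,k\}$. An entry is a left-to-right maximum (LRMax) if it exceeds all entries to its left. For a $321$-containing permutation $p$, the associated triple $(a,b,c)$ is: $a$ is the rightmost entry of $p$ that plays the role of the "1" in some occurrence of $321$; $b$ is the rightmost entry to the left of $a$ that exceeds $a$; $c$ is the first entry to the right of $a$ that is not a LRMax, with $c=\infty$ if no such entry exists. *)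

theory Defs
  imports Main
begin

text \<open>Permutations of [n] in one-line notation are lists; positions are 0-based.\<close>

definition is_perm :: "nat list \<Rightarrow> bool" where
  "is_perm p \<longleftrightarrow> distinct p \<and> set p = {1..length p}"

definition contains :: "nat list \<Rightarrow> nat list \<Rightarrow> bool" where
  "contains p q \<longleftrightarrow> (\<exists>f :: nat \<Rightarrow> nat.
      (\<forall>i j. i < j \<and> j < length q \<longrightarrow> f i < f j) \<and>
      (\<forall>i < length q. f i < length p) \<and>
      (\<forall>i < length q. \<forall>j < length q. (q ! i < q ! j \<longleftrightarrow> p ! f i < p ! f j)))"

definition avoids :: "nat list \<Rightarrow> nat list \<Rightarrow> bool" where
  "avoids p q \<longleftrightarrow> \<not> contains p q"

definition indecomposable :: "nat list \<Rightarrow> bool" where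
  "indecomposable p \<longleftrightarrow>
     (\<forall>k. 1 \<le> k \<and> k \<le> length p - 1 \<longrightarrow> set (take k p) \<noteq> {1..k})"

definition lrmax :: "nat list \<Rightarrow> nat \<Rightarrow> bool" where
  "lrmax p m \<longleftrightarrow> (\<forall>i < m. p ! i < p ! m)"

definition is_321_one :: "nat list \<Rightarrow> nat \<Rightarrow> bool" where
  "is_321_one p k \<longleftrightarrow> (\<exists>i j. i < j \<and> j < k \<and> k < length p \<and> p ! i > p ! j \<and> p ! j > p ! k)"

text \<open>Associated triple (a,b,c); c = None encodes c = infinity.\<close>
definition assoc_triple :: "nat list \<Rightarrow> nat \<Rightarrow> nat \<Rightarrow> nat option \<Rightarrow> bool" where
  "assoc_triple p a b c \<longleftrightarrow> (\<exists>ka jb.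
      is_321_one p ka \<and> (\<forall>k. is_321_one p k \<longrightarrow> k \<le> ka) \<and> a = p ! ka \<and>
      jb < ka \<and> p ! jb > p ! ka \<and> (\<forall>j. j < ka \<and> p ! j > p ! ka \<longrightarrow> j \<le> jb) \<and> b = p ! jb \<and>
      c = (if \<exists>m. ka < m \<and> m < length p \<and> \<not> lrmax p m
           then Some (p ! (LEAST m. ka < m \<and> m < length p \<and> \<not> lrmax p m))
           else None))"

end

theory Submission
  imports Defs
begin

text \<open>Take an occurrence of 321 at positions i < j < ka ending in a. As b is the rightmost entry
  before a that exceeds a, j lies weakly left of b's position. If the entry at i is smaller than b,
  the entries at i, j, jb, ka form a 3241; so avoiding 3241 forces it to exceed b, and it is the
  required w.\<close>

lemma contains_3241I:
  assumes "i < j" "j < k" "k < l" "l < length p"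
    and "p ! l < p ! j" "p ! j < p ! i" "p ! i < p ! k"
  shows "contains p [3,2,4,1]"
  unfolding contains_def
proof (intro exI[of _ "(!) [i, j, k, l]"] conjI allI impI)
  fix x y assume "x < y \<and> y < length [3::nat, 2, 4, 1]"
  then show "[i, j, k, l] ! x < [i, j, k, l] ! y"
    using assms by (auto simp: less_Suc_eq numeral_eq_Suc)
next
  fix x assume "x < length [3::nat, 2, 4, 1]"
  then show "[i, j, k, l] ! x < length p"
    using assms by (auto simp: less_Suc_eq numeral_eq_Suc)
next
  fix x y assume "x < length [3::nat, 2, 4, 1]" "y < length [3::nat, 2, 4, 1]"
  then show "([3::nat, 2, 4, 1] ! x < [3, 2, 4, 1] ! y) \<longleftrightarrow> (p ! ([i, j, k, l] ! x) < p ! ([i, j, k, l] ! y))"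
    using assms by (auto simp: less_Suc_eq numeral_eq_Suc)
qed

lemma larger_entry_before_rightmost_larger:
  assumes "distinct p" "avoids p [3,2,4,1]" "is_321_one p ka"
    and "jb < ka" "p ! ka < p ! jb"
    and rightmost: "\<And>j. j < ka \<Longrightarrow> p ! ka < p ! j \<Longrightarrow> j \<le> jb"
  shows "\<exists>i < jb. p ! jb < p ! i"
proof -
  obtain i j where ij: "i < j" "j < ka" "ka < length p" "p ! j < p ! i" "p ! ka < p ! j"
    using assms(3) unfolding is_321_one_def by blast
  have "j \<le> jb" using rightmost ij by blast
  show ?thesis
  proof (cases "j = jb")
    case True
    then show ?thesis using ij by blast
  next
    case False
    with \<open>j \<le> jb\<close> have "j < jb" by simp
    have "p ! i \<noteq> p ! jb"
      using assms(1) ij \<open>j < jb\<close> \<open>jb < ka\<close> by (simp add: nth_eq_iff_index_eq)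
    moreover have "\<not> p ! i < p ! jb"
      using contains_3241I[of i j jb ka p] ij \<open>j < jb\<close> \<open>jb < ka\<close> assms(2)
      unfolding avoids_def by linarith
    ultimately show ?thesis using ij \<open>j < jb\<close> by (intro exI[of _ i]) auto
  qed
qed

theorem proposition4:
  fixes p :: "nat list" and a b :: nat and c :: "nat option"
  assumes "is_perm p"
    and "indecomposable p"
    and "avoids p [3,2,4,1]"
    and "avoids p [4,3,2,1]"
    and "contains p [3,2,1]"
    and "assoc_triple p a b c"
  shows "\<exists>i j k. i < j \<and> j < k \<and> k < length p \<and> p ! j = b \<and> p ! k = a \<and>
                p ! i > p ! j \<and> p ! j > p ! k"
proof -
  obtain ka jb where one: "is_321_one p ka" and a: "a = p ! ka" and b: "b = p ! jb"
    and jb: "jb < ka" "p ! ka < p ! jb"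
    and rightmost: "\<forall>j. j < ka \<and> p ! ka < p ! j \<longrightarrow> j \<le> jb"
    using assms(6) unfolding assoc_triple_def by blast
  have "ka < length p" using one unfolding is_321_one_def by blast
  moreover obtain i where "i < jb" "p ! jb < p ! i"
    using larger_entry_before_rightmost_larger[OF _ assms(3) one jb] rightmost assms(1)
    unfolding is_perm_def by blast
  ultimately show ?thesis using a b jb by blast
qed

end
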